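(* Let $a<b$ be real numbers, let $g$ be a complex-valued $C^1$ function and $I$ a real-valued $C^2$ function, both defined on $[a,b+1]$. Suppose there is $\alpha>0$ such that, as $\delta\to0^+$, the Lebesgue measure of $\{x\in[a,b]: I'(x)\in 2\pi\mathbb{Z}+[-\delta,\delta]\}$ is $\mathcal{O}(\delta^\alpha)$. Let $\epsilon_N\in[-1,1]$ for each $N$. Then \[ \lim_{N\to\infty}\sum_{k=1}^{\lfloor (b-a)N\rfloor} e^{iNI(a+(k+\epsilon_N)/N)}\,g\Big(a+\frac{k+\epsilon_N}{N}\Big)\frac1N=0. \] *)

theory Defs
  imports "HOL-Analysis.Analysis" "HOL-Library.Landau_Symbols"
begin

end

theory Submission
  imports Defs
begin

(* Cut the sample points into consecutive blocks of a fixed length M. On the block starting at y,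
   a first-order Taylor expansion of I and the Lipschitz bound on g replace the terms by
   g(y) exp(i N I(y)) exp(i r I'(y)), r < M, at a cost O(M^3/N) per block. If I'(y) is at distance
   more than \<eta> from 2\<pi>\<int>, the geometric sum over r is bounded independently of M, so these blocks
   contribute O((b - a)/M) to the normalised sum. For large N the Lipschitz bound on I' puts every
   other (resonant) block inside the set where I' is within 2\<eta> of 2\<pi>\<int>, so the resonant blocks
   contribute at most sup |g| times the measure of that set, which tends to 0 with \<eta> by hypothesis.
   Choose \<eta>, then M, then N. *)

lemma bounded_vector_derivative_imp_lipschitz:
  fixes f f' :: "real \<Rightarrow> 'a::real_normed_vector"
  assumes "\<And>t. t \<in> {c..d} \<Longrightarrow> (f has_vector_derivative f' t) (at t within {c..d})"
    and "\<And>t. t \<in> {c..d} \<Longrightarrow> norm (f' t) \<le> B" and "0 \<le> B"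
  shows "B-lipschitz_on {c..d} f"
proof (rule bounded_derivative_imp_lipschitz[where f' = "\<lambda>t h. h *\<^sub>R f' t"])
  show "(f has_derivative (\<lambda>h. h *\<^sub>R f' t)) (at t within {c..d})" if "t \<in> {c..d}" for t
    using assms(1)[OF that] by (simp add: has_vector_derivative_def)
  show "onorm (\<lambda>h. h *\<^sub>R f' t) \<le> B" if "t \<in> {c..d}" for t
    using assms(2)[OF that] onorm_scaleR_left[OF bounded_linear_ident, of "f' t"] by (simp add: onorm_id)
qed (use assms in auto)

lemma first_order_taylor_bound:
  fixes f f' :: "real \<Rightarrow> 'a::real_normed_vector"
  assumes deriv: "\<And>t. t \<in> {c..d} \<Longrightarrow> (f has_vector_derivative f' t) (at t within {c..d})"
    and lip: "L-lipschitz_on {c..d} f'"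
    and x: "x \<in> {c..d}" and y: "y \<in> {c..d}"
  shows "norm (f x - f y - (x - y) *\<^sub>R f' y) \<le> L * (x - y)\<^sup>2"
proof -
  have seg: "closed_segment y x \<subseteq> {c..d}"
    using x y by (simp add: closed_segment_subset)
  have "norm (f x - f y - (x - y) *\<^sub>R f' y) \<le> norm (x - y) * (L * \<bar>x - y\<bar>)"
  proof (rule vector_differentiable_bound_linearization[where S = "closed_segment y x"])
    show "(f has_vector_derivative f' t) (at t within closed_segment y x)"
      if "t \<in> closed_segment y x" for t
      using deriv seg that by (blast intro: has_vector_derivative_within_subset)
    show "norm (f' t - f' y) \<le> L * \<bar>x - y\<bar>" if "t \<in> closed_segment y x" for t
    proof -
      have "norm (f' t - f' y) \<le> L * \<bar>t - y\<bar>"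
        using lipschitz_onD[OF lip] seg that y by (force simp: dist_norm dist_real_def)
      also have "\<dots> \<le> L * \<bar>x - y\<bar>"
        using segment_bound1[OF that] lipschitz_on_nonneg[OF lip] by (intro mult_left_mono) auto
      finally show ?thesis .
    qed
  qed auto
  thus ?thesis by (simp add: power2_eq_square abs_mult_self_eq mult_ac)
qed

lemma tendsto_zero_if_bigo:
  assumes "f \<in> O[F](g)" and "(g \<longlongrightarrow> 0) F"
  shows "(f \<longlongrightarrow> 0) F"
proof -
  obtain c where "eventually (\<lambda>x. norm (f x) \<le> c * norm (g x)) F"
    using assms(1) by (elim landau_o.bigE) auto
  moreover have "((\<lambda>x. c * norm (g x)) \<longlongrightarrow> 0) F"
    using tendsto_mult_right_zero[OF tendsto_norm_zero[OF assms(2)]] .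
  ultimately show ?thesis
    by (rule Lim_null_comparison)
qed

lemma tendsto_zero_if_bigo_powr:
  fixes f :: "real \<Rightarrow> real"
  assumes "0 < \<alpha>" and "f \<in> O[at_right 0](\<lambda>\<delta>. \<delta> powr \<alpha>)"
  shows "(f \<longlongrightarrow> 0) (at_right 0)"
proof (rule tendsto_zero_if_bigo[OF assms(2)])
  show "((\<lambda>\<delta>. \<delta> powr \<alpha>) \<longlongrightarrow> 0) (at_right 0)"
    using assms(1) by (intro tendsto_zero_powrI tendsto_ident_at tendsto_const)
       (auto simp: eventually_at_right_field)
qed

lemma norm_exp_i_diff_le:
  fixes u v :: real
  shows "norm (exp (\<i> * of_real u) - exp (\<i> * of_real v)) \<le> \<bar>u - v\<bar>"
proof -
  have "exp (\<i> * of_real u) - exp (\<i> * of_real v) = exp (\<i> * of_real v) * (exp (\<i> * of_real (u - v)) - 1)"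
    by (simp add: algebra_simps flip: exp_add)
  hence "norm (exp (\<i> * of_real u) - exp (\<i> * of_real v)) = 2 * \<bar>sin ((u - v) / 2)\<bar>"
    by (simp add: norm_mult dist_exp_i_1 del: of_real_diff)
  also have "\<dots> \<le> \<bar>u - v\<bar>"
    using abs_sin_x_le_abs_x[of "(u - v) / 2"] by simp
  finally show ?thesis .
qed

lemma norm_sum_exp_i_mult_le:
  fixes \<theta> :: real
  assumes "exp (\<i> * of_real \<theta>) \<noteq> 1"
  shows "norm (\<Sum>r<M. exp (\<i> * of_real (real r * \<theta>))) \<le> 2 / norm (1 - exp (\<i> * of_real \<theta>))"
proof -
  define z where "z = exp (\<i> * of_real \<theta>)"
  have "(\<Sum>r<M. exp (\<i> * of_real (real r * \<theta>))) = (\<Sum>r<M. z ^ r)"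
    unfolding z_def by (intro sum.cong refl) (simp add: exp_of_nat_mult[symmetric] mult_ac)
  also have "norm \<dots> = norm (1 - z ^ M) / norm (1 - z)"
    using assms by (simp add: z_def sum_gp_strict norm_divide)
  also have "\<dots> \<le> 2 / norm (1 - z)"
  proof (rule divide_right_mono)
    have "norm (1 - z ^ M) \<le> norm (1::complex) + norm (z ^ M)" by (rule norm_triangle_ineq4)
    thus "norm (1 - z ^ M) \<le> 2" by (simp add: z_def norm_power)
  qed simp
  finally show ?thesis unfolding z_def .
qed

lemma norm_1_minus_exp_i: "norm (1 - exp (\<i> * of_real \<theta>)) = sqrt (2 - 2 * cos \<theta>)"
proof -
  have "norm (1 - exp (\<i> * of_real \<theta>)) = 2 * \<bar>sin (\<theta> / 2)\<bar>"
    using dist_exp_i_1[of \<theta>] by (simp add: norm_minus_commute)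
  also have "\<dots> = sqrt ((2 * sin (\<theta> / 2))\<^sup>2)" by (simp only: real_sqrt_abs abs_mult)
  also have "(2 * sin (\<theta> / 2))\<^sup>2 = 2 - 2 * cos \<theta>"
    using cos_double_sin[of "\<theta> / 2"] by (simp add: power_mult_distrib)
  finally show ?thesis .
qed

lemma exp_i_ne_1:
  assumes "0 < \<eta>" "\<eta> \<le> pi"
  shows "exp (\<i> * of_real \<eta>) \<noteq> 1"
proof -
  have "cos \<eta> < cos 0" using assms by (intro cos_monotone_0_pi) auto
  thus ?thesis using norm_1_minus_exp_i[of \<eta>] by auto
qed

definition near_2pi_int :: "real \<Rightarrow> real \<Rightarrow> bool" where
  "near_2pi_int \<delta> \<theta> \<longleftrightarrow> (\<exists>n::int. \<bar>\<theta> - 2 * pi * of_int n\<bar> \<le> \<delta>)"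

lemma cos_le_cos_if_not_near_2pi_int:
  assumes "0 < \<eta>" "\<eta> \<le> pi" and "\<not> near_2pi_int \<eta> \<theta>"
  shows "cos \<theta> \<le> cos \<eta>"
proof -
  define n where "n = \<lfloor>\<theta> / (2 * pi)\<rfloor>"
  define t where "t = \<theta> - 2 * pi * of_int n"
  have "of_int n \<le> \<theta> / (2 * pi)" "\<theta> / (2 * pi) < of_int n + 1"
    unfolding n_def by linarith+
  hence "0 \<le> t" "t < 2 * pi"
    unfolding t_def using pi_gt_zero by (auto simp: field_simps)
  moreover have far: "\<not> \<bar>\<theta> - 2 * pi * of_int m\<bar> \<le> \<eta>" for m
    using assms(3) by (auto simp: near_2pi_int_def)
  ultimately have t: "\<eta> < t" "t < 2 * pi - \<eta>"
    using far[of n] far[of "n + 1"] unfolding t_def by (auto simp: algebra_simps)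
  have "cos \<theta> = cos t"
    unfolding t_def by (simp add: cos_diff mult.assoc[symmetric])
  also have "cos t \<le> cos \<eta>"
  proof (cases "t \<le> pi")
    case True
    then show ?thesis using t assms by (intro cos_monotone_0_pi_le) auto
  next
    case False
    have "cos t = cos (2 * pi - t)" by (simp add: cos_diff)
    also have "\<dots> \<le> cos \<eta>" using False t assms by (intro cos_monotone_0_pi_le) auto
    finally show ?thesis .
  qed
  finally show ?thesis .
qed

lemma norm_1_minus_exp_i_ge_if_not_near_2pi_int:
  assumes "0 < \<eta>" "\<eta> \<le> pi" and "\<not> near_2pi_int \<eta> \<theta>"
  shows "norm (1 - exp (\<i> * of_real \<eta>)) \<le> norm (1 - exp (\<i> * of_real \<theta>))"
  using cos_le_cos_if_not_near_2pi_int[OF assms] by (simp add: norm_1_minus_exp_i)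

lemma norm_sum_exp_i_mult_le_near_2pi_int:
  assumes \<eta>: "0 < \<eta>" "\<eta> \<le> pi"
  shows "norm (\<Sum>r<M. exp (\<i> * of_real (real r * \<theta>)))
         \<le> real M * of_bool (near_2pi_int \<eta> \<theta>) + 2 / norm (1 - exp (\<i> * of_real \<eta>))"
proof (cases "near_2pi_int \<eta> \<theta>")
  case True
  have "norm (\<Sum>r<M. exp (\<i> * of_real (real r * \<theta>))) \<le> (\<Sum>r<M. 1)"
    by (rule sum_norm_le) simp
  thus ?thesis using True by (simp add: add_increasing2)
next
  case False
  have pos: "0 < norm (1 - exp (\<i> * of_real \<eta>))"
    using exp_i_ne_1[OF \<eta>] by simp
  have le: "norm (1 - exp (\<i> * of_real \<eta>)) \<le> norm (1 - exp (\<i> * of_real \<theta>))"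
    using norm_1_minus_exp_i_ge_if_not_near_2pi_int[OF \<eta> False] .
  have "norm (\<Sum>r<M. exp (\<i> * of_real (real r * \<theta>))) \<le> 2 / norm (1 - exp (\<i> * of_real \<theta>))"
    using pos le by (intro norm_sum_exp_i_mult_le) auto
  also have "\<dots> \<le> 2 / norm (1 - exp (\<i> * of_real \<eta>))"
    using pos le by (intro frac_le) auto
  finally show ?thesis using False by simp
qed

lemma near_2pi_int_set_lmeasurable:
  fixes a b :: real and \<phi> :: "real \<Rightarrow> real"
  assumes "continuous_on {a..b} \<phi>"
  shows "{x \<in> {a..b}. near_2pi_int \<delta> (\<phi> x)} \<in> lmeasurable"
proof (rule bounded_set_imp_lmeasurable)
  show "bounded {x \<in> {a..b}. near_2pi_int \<delta> (\<phi> x)}"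
    by (rule bounded_subset[OF bounded_closed_interval[of a b]]) (auto simp: near_2pi_int_def)
  have "closed {x \<in> {a..b}. \<bar>\<phi> x - 2 * pi * of_int n\<bar> \<le> \<delta>}" for n :: int
  proof -
    have "closed ({a..b} \<inter> (\<lambda>x. \<bar>\<phi> x - 2 * pi * of_int n\<bar>) -` {..\<delta>})"
      by (intro continuous_closed_preimage continuous_intros assms closed_atMost)
    thus ?thesis by (simp add: Int_def vimage_def)
  qed
  moreover have "{x \<in> {a..b}. near_2pi_int \<delta> (\<phi> x)} = (\<Union>n. {x \<in> {a..b}. \<bar>\<phi> x - 2 * pi * of_int n\<bar> \<le> \<delta>})"
    by (auto simp: near_2pi_int_def)
  ultimately show "{x \<in> {a..b}. near_2pi_int \<delta> (\<phi> x)} \<in> sets lebesgue"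
    by (auto intro: borel_closed)
qed

lemma sum_lessThan_blocks:
  fixes f :: "nat \<Rightarrow> 'a::comm_monoid_add"
  shows "(\<Sum>k<K. f k) = (\<Sum>j<K div M. \<Sum>r<M. f (j * M + r)) + (\<Sum>k = K div M * M..<K. f k)"
proof -
  have "(\<Sum>k<K. f k) = (\<Sum>k<K div M * M. f k) + (\<Sum>k = K div M * M..<K. f k)"
    by (simp add: lessThan_atLeast0 sum.atLeastLessThan_concat div_times_less_eq_dividend)
  also have "(\<Sum>k<K div M * M. f k) = (\<Sum>j<K div M. \<Sum>k = j * M..<j * M + M. f k)"
    by (rule sum.nat_group[symmetric])
  also have "\<dots> = (\<Sum>j<K div M. \<Sum>r<M. f (j * M + r))"
  proof (rule sum.cong[OF refl])
    show "(\<Sum>k = j * M..<j * M + M. f k) = (\<Sum>r<M. f (j * M + r))" for j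
      using sum.shift_bounds_nat_ivl[of f 0 "j * M" M] by (simp add: add.commute lessThan_atLeast0)
  qed
  finally show ?thesis .
qed

lemma sum_measure_le_if_disjoint:
  assumes "finite A" and "\<And>i. i \<in> A \<Longrightarrow> F i \<in> sets M" and "disjoint_family_on F A"
    and "\<And>i. i \<in> A \<Longrightarrow> F i \<subseteq> S" and "S \<in> fmeasurable M"
  shows "(\<Sum>i\<in>A. measure M (F i)) \<le> measure M S"
proof -
  have fm: "F i \<in> fmeasurable M" if "i \<in> A" for i
    using assms that by (blast intro: fmeasurableI2)
  have "(\<Sum>i\<in>A. measure M (F i)) = measure M (\<Union>i\<in>A. F i)"
    using assms(1,3) fm
    by (intro measure_UNION'[symmetric]) (auto simp: pairwise_def disjnt_def disjoint_family_on_def)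
  also have "\<dots> \<le> measure M S"
    using assms(1,4,5) fm by (intro measure_mono_fmeasurable) (auto intro: fmeasurableD)
  finally show ?thesis .
qed

lemma sample_point_mem:
  fixes a b n e :: real
  assumes "1 \<le> k" "real k \<le> (b - a) * n" "1 \<le> n" "e \<in> {-1..1}"
  shows "a + (real k + e) / n \<in> {a..b + 1}"
proof -
  have "0 \<le> (real k + e) / n" using assms by auto
  moreover have "(real k + e) / n \<le> ((b - a) * n + n) / n"
    using assms by (intro divide_right_mono) auto
  ultimately show ?thesis using assms by (auto simp: field_simps)
qed

locale oscillatory_sum =
  fixes a b G Lg B :: real and g :: "real \<Rightarrow> complex" and I I' :: "real \<Rightarrow> real"
  assumes a_less_b: "a < b"
    and norm_g_le: "\<And>x. x \<in> {a..b + 1} \<Longrightarrow> norm (g x) \<le> G"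
    and g_lipschitz: "Lg-lipschitz_on {a..b + 1} g"
    and I'_lipschitz: "B-lipschitz_on {a..b + 1} I'"
    and I_taylor: "\<And>x y. x \<in> {a..b + 1} \<Longrightarrow> y \<in> {a..b + 1} \<Longrightarrow>
                     \<bar>I x - I y - (x - y) * I' y\<bar> \<le> B * (x - y)\<^sup>2"
begin

definition wave :: "real \<Rightarrow> real \<Rightarrow> complex" where
  "wave n x = exp (\<i> * of_real (n * I x)) * g x"

lemma G_nonneg: "0 \<le> G"
  using norm_g_le[of a] a_less_b by (smt (verit) atLeastAtMost_iff norm_ge_zero)

lemma Lg_nonneg: "0 \<le> Lg"
  using g_lipschitz by (rule lipschitz_on_nonneg)

lemma B_nonneg: "0 \<le> B"
  using I'_lipschitz by (rule lipschitz_on_nonneg)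

lemma norm_wave_le: "x \<in> {a..b + 1} \<Longrightarrow> norm (wave n x) \<le> G"
  by (simp add: wave_def norm_mult norm_g_le)

lemma wave_linearization:
  assumes n: "0 < n" and y: "y \<in> {a..b + 1}" and yh: "y + h \<in> {a..b + 1}"
  shows "norm (wave n (y + h) - wave n y * exp (\<i> * of_real (n * h * I' y)))
         \<le> G * n * B * h\<^sup>2 + Lg * \<bar>h\<bar>"
proof -
  define E1 where "E1 = exp (\<i> * of_real (n * I (y + h)))"
  define E2 where "E2 = exp (\<i> * of_real (n * I y + n * h * I' y))"
  have "wave n (y + h) - wave n y * exp (\<i> * of_real (n * h * I' y))
        = E1 * (g (y + h) - g y) + g y * (E1 - E2)"
    by (simp add: wave_def E1_def E2_def algebra_simps flip: exp_add)
  also have "norm \<dots> \<le> norm (g (y + h) - g y) + norm (g y) * norm (E1 - E2)"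
    using norm_triangle_ineq[of "E1 * (g (y + h) - g y)" "g y * (E1 - E2)"]
    by (simp add: E1_def norm_mult)
  also have "norm (g (y + h) - g y) \<le> Lg * \<bar>h\<bar>"
    using lipschitz_onD[OF g_lipschitz yh y] by (simp add: dist_norm dist_real_def)
  also have "norm (g y) * norm (E1 - E2) \<le> G * (n * (B * h\<^sup>2))"
  proof (rule mult_mono)
    have "norm (E1 - E2) \<le> \<bar>n * I (y + h) - (n * I y + n * h * I' y)\<bar>"
      unfolding E1_def E2_def by (rule norm_exp_i_diff_le)
    also have "\<dots> = n * \<bar>I (y + h) - I y - h * I' y\<bar>"
    proof -
      have "n * I (y + h) - (n * I y + n * h * I' y) = n * (I (y + h) - I y - h * I' y)"
        by (simp add: algebra_simps)
      thus ?thesis using n by (simp add: abs_mult)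
    qed
    also have "\<dots> \<le> n * (B * h\<^sup>2)"
      using I_taylor[OF yh y] n by (intro mult_left_mono) auto
    finally show "norm (E1 - E2) \<le> n * (B * h\<^sup>2)" .
  qed (use norm_g_le[OF y] G_nonneg in auto)
  finally show ?thesis
    by (simp add: mult_ac add.commute)
qed

lemma norm_block_sum_le:
  assumes n: "0 < n" and y: "y \<in> {a..b + 1}"
    and block: "\<And>r. r < M \<Longrightarrow> y + real r / n \<in> {a..b + 1}"
  shows "norm (\<Sum>r<M. wave n (y + real r / n))
         \<le> G * norm (\<Sum>r<M. exp (\<i> * of_real (real r * I' y)))
           + real M * (G * B * real M ^ 2 + Lg * real M) / n"
proof -
  define z where "z r = wave n y * exp (\<i> * of_real (real r * I' y))" for r :: nat
  have "norm (\<Sum>r<M. z r) \<le> G * norm (\<Sum>r<M. exp (\<i> * of_real (real r * I' y)))"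
    using norm_g_le[OF y] by (simp add: z_def wave_def norm_mult flip: sum_distrib_left)
      (simp add: mult_right_mono)
  moreover have "norm (wave n (y + real r / n) - z r) \<le> (G * B * real M ^ 2 + Lg * real M) / n"
    if r: "r < M" for r
  proof -
    have "norm (wave n (y + real r / n) - z r) \<le> G * n * B * (real r / n)\<^sup>2 + Lg * \<bar>real r / n\<bar>"
      using wave_linearization[OF n y block[OF r]] n by (simp add: z_def)
    also have "\<dots> = (G * B * real r ^ 2 + Lg * real r) / n"
      using n by (simp add: field_simps power2_eq_square)
    also have "\<dots> \<le> (G * B * real M ^ 2 + Lg * real M) / n"
      using r n G_nonneg B_nonneg Lg_nonneg
      by (intro divide_right_mono add_mono mult_left_mono power_mono) auto
    finally show ?thesis .
  qed
  hence "norm (\<Sum>r<M. wave n (y + real r / n) - z r) \<le> (\<Sum>r<M. (G * B * real M ^ 2 + Lg * real M) / n)"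
    by (intro sum_norm_le) auto
  ultimately show ?thesis
    using norm_triangle_ineq[of "\<Sum>r<M. z r" "\<Sum>r<M. wave n (y + real r / n) - z r"]
    by (simp add: sum_subtractf)
qed

lemma resonant_block_subset:
  assumes n: "1 \<le> n" and e: "e \<in> {-1..1}"
    and block: "real (j * M + M) \<le> (b - a) * n" and M: "0 < M"
    and fine: "B * (real M + 2) / n \<le> \<eta>"
    and resonant: "near_2pi_int \<eta> (I' (a + (real (j * M) + 1 + e) / n))"
  shows "{a + real (j * M) / n ..< a + real (j * M + M) / n}
         \<subseteq> {x \<in> {a..b}. near_2pi_int (2 * \<eta>) (I' x)}"
proof
  fix t assume t: "t \<in> {a + real (j * M) / n ..< a + real (j * M + M) / n}"
  define y where "y = a + (real (j * M) + 1 + e) / n"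
  have y: "y \<in> {a..b + 1}"
    using sample_point_mem[of "j * M + 1" b a n e] block M n e by (simp add: y_def add_ac)
  have "real (j * M + M) / n \<le> b - a"
    using block n by (simp add: field_simps)
  hence t_mem: "t \<in> {a..b}"
    using t n by (auto intro: order_trans[rotated])
  have "\<bar>t - y\<bar> \<le> (real M + 2) / n"
    using t e n by (auto simp: y_def abs_le_iff field_simps)
  hence "B * \<bar>t - y\<bar> \<le> \<eta>"
    using fine B_nonneg by (smt (verit) mult_left_mono times_divide_eq_right)
  moreover have "\<bar>I' t - I' y\<bar> \<le> B * \<bar>t - y\<bar>"
    using lipschitz_onD[OF I'_lipschitz, of t y] t_mem y by (simp add: dist_real_def)
  ultimately have "\<bar>I' t - I' y\<bar> \<le> \<eta>" by linarith
  moreover obtain m :: int where "\<bar>I' y - 2 * pi * of_int m\<bar> \<le> \<eta>"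
    using resonant by (auto simp: y_def near_2pi_int_def)
  ultimately show "t \<in> {x \<in> {a..b}. near_2pi_int (2 * \<eta>) (I' x)}"
    using t_mem by (auto simp: near_2pi_int_def intro!: exI[of _ m])
qed

lemma card_resonant_blocks_le:
  assumes n: "1 \<le> n" and M: "0 < M" and e: "e \<in> {-1..1}"
    and QM: "real (Q * M) \<le> (b - a) * n" and fine: "B * (real M + 2) / n \<le> \<eta>"
  defines "R \<equiv> {..<Q} \<inter> {j. near_2pi_int \<eta> (I' (a + (real (j * M) + 1 + e) / n))}"
  shows "real (card R) * real M / n \<le> measure lebesgue {x \<in> {a..b}. near_2pi_int (2 * \<eta>) (I' x)}"
proof -
  define J where "J j = {a + real (j * M) / n ..< a + real (j * M + M) / n}" for j
  have measure_J: "measure lebesgue (J j) = real M / n" for j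
    using n by (simp add: J_def add_divide_distrib)
  have "disjnt (J i) (J j)" if "i < j" for i j
  proof -
    have "i * M + M \<le> j * M"
      using that by (metis add.commute mult_Suc less_eq_Suc_le mult_le_mono1)
    hence "real (i * M + M) / n \<le> real (j * M) / n"
      using n by (intro divide_right_mono of_nat_mono) auto
    thus ?thesis by (auto simp: J_def disjnt_def)
  qed
  hence disjoint: "disjoint_family_on J R"
    by (metis disjnt_def disjnt_sym disjoint_family_on_def linorder_neqE_nat)
  have subset: "J j \<subseteq> {x \<in> {a..b}. near_2pi_int (2 * \<eta>) (I' x)}" if "j \<in> R" for j
  proof -
    have "j * M + M \<le> Q * M"
      using that by (simp add: R_def) (metis add.commute mult_Suc less_eq_Suc_le mult_le_mono1)
    hence "real (j * M + M) \<le> (b - a) * n"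
      using QM by (meson of_nat_le_iff order_trans)
    thus ?thesis
      using resonant_block_subset[OF n e _ M fine] that by (simp add: J_def R_def)
  qed
  have measurable: "{x \<in> {a..b}. near_2pi_int (2 * \<eta>) (I' x)} \<in> lmeasurable"
    using lipschitz_on_continuous_on[OF I'_lipschitz]
    by (intro near_2pi_int_set_lmeasurable) (auto intro: continuous_on_subset)
  have "(\<Sum>j\<in>R. measure lebesgue (J j)) \<le> measure lebesgue {x \<in> {a..b}. near_2pi_int (2 * \<eta>) (I' x)}"
  proof (rule sum_measure_le_if_disjoint)
    show "finite R" by (simp add: R_def)
    show "J j \<in> sets lebesgue" for j by (simp add: J_def)
  qed (use disjoint subset measurable in auto)
  thus ?thesis by (simp add: measure_J)
qed

lemma norm_blocks_sum_le_card_resonant: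
  assumes n: "1 \<le> n" and M: "0 < M" and \<eta>: "0 < \<eta>" "\<eta> \<le> pi" and e: "e \<in> {-1..1}"
    and QM: "real (Q * M) \<le> (b - a) * n"
  defines "R \<equiv> {..<Q} \<inter> {j. near_2pi_int \<eta> (I' (a + (real (j * M) + 1 + e) / n))}"
  shows "norm (\<Sum>j<Q. \<Sum>r<M. wave n (a + (real (j * M + r + 1) + e) / n))
         \<le> G * real M * real (card R)
           + real Q * (G * (2 / norm (1 - exp (\<i> * of_real \<eta>)))
                       + real M * ((G * B * real M ^ 2 + Lg * real M) / n))"
proof -
  define y where "y j = a + (real (j * M) + 1 + e) / n" for j
  define C where "C = 2 / norm (1 - exp (\<i> * of_real \<eta>))"
  define E where "E = (G * B * real M ^ 2 + Lg * real M) / n"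
  have point: "a + (real (j * M + r + 1) + e) / n = y j + real r / n" for j r
    using n by (simp add: y_def field_simps)
  have mem: "y j + real r / n \<in> {a..b + 1}" if "j < Q" "r < M" for j r
  proof -
    have "j * M + r + 1 \<le> Suc j * M" using that by simp
    also have "\<dots> \<le> Q * M" using that by (intro mult_le_mono1) simp
    finally have "real (j * M + r + 1) \<le> (b - a) * n"
      using QM by (meson of_nat_le_iff order_trans)
    thus ?thesis
      using sample_point_mem[of "j * M + r + 1" b a n e] n e unfolding point by simp
  qed
  have "norm (\<Sum>r<M. wave n (y j + real r / n))
        \<le> G * real M * of_bool (near_2pi_int \<eta> (I' (y j))) + (G * C + real M * E)" if "j < Q" for j
  proof -
    have "norm (\<Sum>r<M. wave n (y j + real r / n))
          \<le> G * norm (\<Sum>r<M. exp (\<i> * of_real (real r * I' (y j)))) + real M * E"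
      using norm_block_sum_le[of n "y j" M] mem[OF that] mem[OF that M] n by (simp add: E_def)
    also have "G * norm (\<Sum>r<M. exp (\<i> * of_real (real r * I' (y j))))
               \<le> G * (real M * of_bool (near_2pi_int \<eta> (I' (y j))) + C)"
      unfolding C_def using norm_sum_exp_i_mult_le_near_2pi_int[OF \<eta>] G_nonneg
      by (rule mult_left_mono)
    finally show ?thesis by (simp add: algebra_simps)
  qed
  hence "norm (\<Sum>j<Q. \<Sum>r<M. wave n (y j + real r / n))
         \<le> (\<Sum>j<Q. G * real M * of_bool (near_2pi_int \<eta> (I' (y j))) + (G * C + real M * E))"
    by (intro sum_norm_le) auto
  also have "\<dots> = G * real M * real (card R) + real Q * (G * C + real M * E)"
    by (simp add: sum.distrib R_def y_def flip: sum_distrib_left)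
  finally show ?thesis
    unfolding point C_def E_def .
qed

lemma norm_blocks_sum_le:
  assumes n: "1 \<le> n" and M: "0 < M" and \<eta>: "0 < \<eta>" "\<eta> \<le> pi" and e: "e \<in> {-1..1}"
    and QM: "real (Q * M) \<le> (b - a) * n" and fine: "B * (real M + 2) / n \<le> \<eta>"
  shows "norm (\<Sum>j<Q. \<Sum>r<M. wave n (a + (real (j * M + r + 1) + e) / n)) / n
         \<le> G * measure lebesgue {x \<in> {a..b}. near_2pi_int (2 * \<eta>) (I' x)}
           + G * (b - a) * (2 / norm (1 - exp (\<i> * of_real \<eta>))) / real M
           + (b - a) * (G * B * real M ^ 2 + Lg * real M) / n"
proof -
  define R where "R = {..<Q} \<inter> {j. near_2pi_int \<eta> (I' (a + (real (j * M) + 1 + e) / n))}"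
  define C where "C = 2 / norm (1 - exp (\<i> * of_real \<eta>))"
  define E where "E = (G * B * real M ^ 2 + Lg * real M) / n"
  have "norm (\<Sum>j<Q. \<Sum>r<M. wave n (a + (real (j * M + r + 1) + e) / n)) / n
      \<le> (G * real M * real (card R) + real Q * (G * C + real M * E)) / n"
    using norm_blocks_sum_le_card_resonant[OF n M \<eta> e QM] n
    by (intro divide_right_mono) (auto simp: R_def C_def E_def)
  also have "\<dots> = G * (real (card R) * real M / n) + G * C * (real Q / n) + E * (real (Q * M) / n)"
    using n by (simp add: field_simps)
  also have "\<dots> \<le> G * measure lebesgue {x \<in> {a..b}. near_2pi_int (2 * \<eta>) (I' x)}
      + G * C * ((b - a) / real M) + E * (b - a)"
  proof (intro add_mono mult_left_mono)
    show "real (card R) * real M / n \<le> measure lebesgue {x \<in> {a..b}. near_2pi_int (2 * \<eta>) (I' x)}"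
      using card_resonant_blocks_le[OF n M e QM fine] by (simp add: R_def)
    show "real Q / n \<le> (b - a) / real M" "real (Q * M) / n \<le> b - a"
      using QM n M by (simp_all add: field_simps)
  qed (use G_nonneg n in \<open>simp_all add: C_def E_def B_nonneg Lg_nonneg\<close>)
  finally show ?thesis
    unfolding C_def E_def by (simp add: algebra_simps)
qed

lemma norm_incomplete_block_le:
  assumes n: "1 \<le> n" and M: "0 < M" and e: "e \<in> {-1..1}" and K: "real K \<le> (b - a) * n"
  shows "norm (\<Sum>k = K div M * M..<K. wave n (a + (real (k + 1) + e) / n)) \<le> real M * G"
proof -
  have "norm (\<Sum>k = K div M * M..<K. wave n (a + (real (k + 1) + e) / n))
        \<le> (\<Sum>k = K div M * M..<K. G)"
  proof (rule sum_norm_le)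
    fix k assume "k \<in> {K div M * M..<K}"
    hence "k + 1 \<le> K" by simp
    hence "real (k + 1) \<le> (b - a) * n" using K by (meson of_nat_le_iff order_trans)
    thus "norm (wave n (a + (real (k + 1) + e) / n)) \<le> G"
      using sample_point_mem[of "k + 1" b a n e] n e by (intro norm_wave_le) auto
  qed
  also have "\<dots> = real (K mod M) * G"
    by (simp only: sum_constant card_atLeastLessThan minus_div_mult_eq_mod)
  also have "\<dots> \<le> real M * G"
    using M G_nonneg by (intro mult_right_mono) auto
  finally show ?thesis .
qed

lemma norm_phase_sum_le:
  assumes n: "1 \<le> n" and M: "0 < M" and \<eta>: "0 < \<eta>" "\<eta> \<le> pi" and e: "e \<in> {-1..1}"
    and fine: "B * (real M + 2) / n \<le> \<eta>"
  shows "norm (\<Sum>k = 1..nat \<lfloor>(b - a) * n\<rfloor>. wave n (a + (real k + e) / n)) / n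
         \<le> G * measure lebesgue {x \<in> {a..b}. near_2pi_int (2 * \<eta>) (I' x)}
           + G * (b - a) * (2 / norm (1 - exp (\<i> * of_real \<eta>))) / real M
           + (b - a) * (G * B * real M ^ 2 + Lg * real M) / n + real M * G / n"
proof -
  define K where "K = nat \<lfloor>(b - a) * n\<rfloor>"
  define f where "f k = wave n (a + (real (k + 1) + e) / n)" for k
  have K: "real K \<le> (b - a) * n"
    using a_less_b n by (simp add: K_def)
  have QM: "real (K div M * M) \<le> (b - a) * n"
    using K by (meson div_times_less_eq_dividend of_nat_le_iff order_trans)
  have "(\<Sum>k = 1..K. wave n (a + (real k + e) / n)) = (\<Sum>k<K. f k)"
    using sum.atLeast1_atMost_eq[of "\<lambda>k. wave n (a + (real k + e) / n)" K] by (simp add: f_def)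
  also have "\<dots> = (\<Sum>j<K div M. \<Sum>r<M. f (j * M + r)) + (\<Sum>k = K div M * M..<K. f k)"
    by (rule sum_lessThan_blocks)
  finally have "norm (\<Sum>k = 1..K. wave n (a + (real k + e) / n))
      \<le> norm (\<Sum>j<K div M. \<Sum>r<M. f (j * M + r)) + norm (\<Sum>k = K div M * M..<K. f k)"
    by (simp add: norm_triangle_ineq)
  hence split: "norm (\<Sum>k = 1..K. wave n (a + (real k + e) / n)) / n
      \<le> norm (\<Sum>j<K div M. \<Sum>r<M. f (j * M + r)) / n + norm (\<Sum>k = K div M * M..<K. f k) / n"
    using divide_right_mono[OF _ order_trans[OF zero_le_one n]] by (simp flip: add_divide_distrib)
  have "norm (\<Sum>k = K div M * M..<K. f k) / n \<le> real M * G / n"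
    unfolding f_def using norm_incomplete_block_le[OF n M e K] n by (intro divide_right_mono) auto
  moreover have "norm (\<Sum>j<K div M. \<Sum>r<M. f (j * M + r)) / n
      \<le> G * measure lebesgue {x \<in> {a..b}. near_2pi_int (2 * \<eta>) (I' x)}
        + G * (b - a) * (2 / norm (1 - exp (\<i> * of_real \<eta>))) / real M
        + (b - a) * (G * B * real M ^ 2 + Lg * real M) / n"
    using norm_blocks_sum_le[OF n M \<eta> e QM fine] by (simp add: f_def)
  ultimately show ?thesis
    using split by (simp add: K_def)
qed

lemma eventually_norm_phase_sum_le:
  assumes resonance: "((\<lambda>\<delta>. measure lebesgue {x \<in> {a..b}. near_2pi_int \<delta> (I' x)}) \<longlongrightarrow> 0) (at_right 0)"
    and eps: "\<And>N. \<epsilon> N \<in> {-1..1}" and ep: "0 < ep"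
  shows "eventually (\<lambda>N. norm (\<Sum>k = 1..nat \<lfloor>(b - a) * real N\<rfloor>.
           wave (real N) (a + (real k + \<epsilon> N) / real N)) / real N \<le> (G + 3) * ep) sequentially"
proof -
  obtain d where d: "0 < d"
    and small: "\<And>\<delta>. 0 < \<delta> \<Longrightarrow> \<delta> < d \<Longrightarrow> measure lebesgue {x \<in> {a..b}. near_2pi_int \<delta> (I' x)} < ep"
    using order_tendstoD(2)[OF resonance ep] by (auto simp: eventually_at_right_field)
  define \<eta> where "\<eta> = min (d / 4) pi"
  have \<eta>: "0 < \<eta>" "\<eta> \<le> pi" and \<mu>: "measure lebesgue {x \<in> {a..b}. near_2pi_int (2 * \<eta>) (I' x)} < ep"
    using d small[of "2 * \<eta>"] by (auto simp: \<eta>_def)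
  define C where "C = 2 / norm (1 - exp (\<i> * of_real \<eta>))"
  define M where "M = nat \<lceil>G * (b - a) * C / ep\<rceil> + 1"
  have M: "0 < M" by (simp add: M_def)
  have "G * (b - a) * C / ep \<le> real M" unfolding M_def by linarith
  hence MC: "G * (b - a) * C / real M \<le> ep"
    using ep M by (simp add: field_simps)
  have over_N: "eventually (\<lambda>N. c / real N \<le> t) sequentially" if "0 < t" for c t :: real
    using order_tendstoD(2)[OF lim_const_over_n[of c] that] by (auto elim: eventually_mono)
  have "eventually (\<lambda>N. 1 \<le> real N \<and> B * (real M + 2) / real N \<le> \<eta>
      \<and> (b - a) * (G * B * real M ^ 2 + Lg * real M) / real N \<le> ep \<and> real M * G / real N \<le> ep) sequentially"
    using eventually_ge_at_top[of 1] over_N[OF \<eta>(1), of "B * (real M + 2)"]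
      over_N[OF ep, of "(b - a) * (G * B * real M ^ 2 + Lg * real M)"] over_N[OF ep, of "real M * G"]
    by eventually_elim (auto simp del: of_nat_le_iff)
  thus ?thesis
  proof eventually_elim
    case (elim N)
    have "G * measure lebesgue {x \<in> {a..b}. near_2pi_int (2 * \<eta>) (I' x)} \<le> G * ep"
      using \<mu> G_nonneg by (intro mult_left_mono) auto
    with norm_phase_sum_le[of "real N" M \<eta> "\<epsilon> N"] elim M \<eta> eps MC
    show ?case by (simp add: C_def algebra_simps)
  qed
qed

lemma phase_sum_tendsto_zero:
  assumes resonance: "((\<lambda>\<delta>. measure lebesgue {x \<in> {a..b}. near_2pi_int \<delta> (I' x)}) \<longlongrightarrow> 0) (at_right 0)"
    and eps: "\<And>N. \<epsilon> N \<in> {-1..1}"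
  shows "(\<lambda>N. (\<Sum>k = 1..nat \<lfloor>(b - a) * real N\<rfloor>.
           wave (real N) (a + (real k + \<epsilon> N) / real N)) / of_real (real N)) \<longlonglongrightarrow> 0"
proof (rule tendstoI)
  fix r :: real assume "0 < r"
  hence "0 < r / (G + 4)" using G_nonneg by simp
  have "eventually (\<lambda>N. norm (\<Sum>k = 1..nat \<lfloor>(b - a) * real N\<rfloor>.
           wave (real N) (a + (real k + \<epsilon> N) / real N)) / real N \<le> (G + 3) * (r / (G + 4))) sequentially"
    using eventually_norm_phase_sum_le[OF resonance eps] \<open>0 < r / (G + 4)\<close> .
  then show "eventually (\<lambda>N. dist ((\<Sum>k = 1..nat \<lfloor>(b - a) * real N\<rfloor>.
           wave (real N) (a + (real k + \<epsilon> N) / real N)) / of_real (real N)) 0 < r) sequentially"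
  proof eventually_elim
    case (elim N)
    have "(G + 3) * (r / (G + 4)) < r"
      using \<open>0 < r\<close> G_nonneg by (simp add: field_simps)
    thus ?case using elim by (simp add: dist_norm norm_divide)
  qed
qed

end

theorem lemma4p1:
  fixes a b :: real and g g' :: "real \<Rightarrow> complex" and I I' I'' :: "real \<Rightarrow> real"
    and \<epsilon> :: "nat \<Rightarrow> real"
  assumes ab: "a < b"
    and g_deriv: "\<And>x. x \<in> {a..b+1} \<Longrightarrow> (g has_vector_derivative g' x) (at x within {a..b+1})"
    and g'_cont: "continuous_on {a..b+1} g'"
    and I_deriv: "\<And>x. x \<in> {a..b+1} \<Longrightarrow> (I has_real_derivative I' x) (at x within {a..b+1})"
    and I'_deriv: "\<And>x. x \<in> {a..b+1} \<Longrightarrow> (I' has_real_derivative I'' x) (at x within {a..b+1})"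
    and I''_cont: "continuous_on {a..b+1} I''"
    and meas: "\<exists>\<alpha>>0. (\<lambda>\<delta>. measure lebesgue
                 {x \<in> {a..b}. \<exists>n::int. \<bar>I' x - 2 * pi * of_int n\<bar> \<le> \<delta>})
               \<in> O[at_right 0](\<lambda>\<delta>. \<delta> powr \<alpha>)"
    and eps: "\<And>N. \<epsilon> N \<in> {-1..1}"
  shows "(\<lambda>N. \<Sum>k = 1..nat \<lfloor>(b - a) * real N\<rfloor>.
            exp (\<i> * of_real (real N * I (a + (real k + \<epsilon> N) / real N)))
            * g (a + (real k + \<epsilon> N) / real N) / of_real (real N))
         \<longlonglongrightarrow> 0"
proof -
  obtain G where G: "\<And>x. x \<in> {a..b+1} \<Longrightarrow> norm (g x) \<le> G"
    using continuous_on_compact_bound[OF compact_Icc continuous_on_vector_derivative[OF g_deriv]]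
    by blast
  obtain Lg where "0 \<le> Lg" "\<And>x. x \<in> {a..b+1} \<Longrightarrow> norm (g' x) \<le> Lg"
    using continuous_on_compact_bound[OF compact_Icc g'_cont] by blast
  with g_deriv have g_lipschitz: "Lg-lipschitz_on {a..b+1} g"
    by (intro bounded_vector_derivative_imp_lipschitz)
  obtain B where "0 \<le> B" "\<And>x. x \<in> {a..b+1} \<Longrightarrow> norm (I'' x) \<le> B"
    using continuous_on_compact_bound[OF compact_Icc I''_cont] by blast
  with I'_deriv have I'_lipschitz: "B-lipschitz_on {a..b+1} I'"
    by (intro bounded_vector_derivative_imp_lipschitz)
       (auto simp: has_real_derivative_iff_has_vector_derivative)
  have "\<bar>I x - I y - (x - y) * I' y\<bar> \<le> B * (x - y)\<^sup>2" if "x \<in> {a..b+1}" "y \<in> {a..b+1}" for x y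
    using first_order_taylor_bound[OF _ I'_lipschitz that] I_deriv
    by (simp add: has_real_derivative_iff_has_vector_derivative)
  with ab G g_lipschitz I'_lipschitz interpret oscillatory_sum a b G Lg B g I I'
    by unfold_locales auto
  have "((\<lambda>\<delta>. measure lebesgue {x \<in> {a..b}. near_2pi_int \<delta> (I' x)}) \<longlongrightarrow> 0) (at_right 0)"
    using meas by (auto simp: near_2pi_int_def intro: tendsto_zero_if_bigo_powr)
  from phase_sum_tendsto_zero[OF this eps] show ?thesis
    by (simp add: wave_def sum_divide_distrib)
qed

end
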